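(* Fix $\gamma\in(0,1]$. For any $\epsilon\in(0,\gamma]$, any $n>0$ and any $\mathbf{z}_n\in\mathcal{Z}^n$, $$ \ln \mathcal{N}\left(\epsilon, \mathcal{F}_{\mathcal{G},\gamma}, d_{2,\mathbf{z}_n}\right) \leqslant 640\, C\, d_{\mathcal{G}_{0}}\!\left(\frac{\epsilon}{384}\right) \ln^2\!\left(\frac{256\, C M^2}{\epsilon^2}\, d_{\mathcal{G}_{0}}\!\left(\frac{\epsilon}{384}\right) \right)\ln\!\left(\frac{7\gamma}{\epsilon}\right). $$
   Context: Let $C>2$, $\mathcal{Y}=\{1,\dots,C\}$, $\mathcal{X}=[0,A]^d$ (with $A\ge1$), $\mathcal{Z}=\mathcal{X}\times\mathcal{Y}$. Let $\mathcal{G}_0$ be a class of functions $\mathcal{X}\to[0,M]$, $M\ge1$ (in the paper, $\mathcal{G}_0\subseteq BV([0,A]^d,[0,M])$ of total variation at most $V$), and $\mathcal{G}=\mathcal{G}_0^C$. For $g\in\mathcal{G}$ and $(x,y)\in\mathcal{Z}$ put $f_{g,\gamma}(x,y)=\max\left(0,\min\left(\gamma,\tfrac12\big(g_y(x)-\max_{k\ne y}g_k(x)\big)\right)\right)$ and $\mathcal{F}_{\mathcal{G},\gamma}=\{f_{g,\gamma}:g\in\mathcal{G}\}$. For $\mathbf{z}_n=(z_i)$, $d_{2,\mathbf{z}_n}(f,f')=\left(\frac1n\sum_{i=1}^n|f(z_i)-f'(z_i)|^2\right)^{1/2}$. The covering number $\mathcal{N}(\epsilon,\mathcal{F},\rho)$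 is the smallest cardinality of a subset $\bar{\mathcal{F}}\subseteq\mathcal{F}$ such that every $f\in\mathcal{F}$ has some $\bar f\in\bar{\mathcal{F}}$ with $\rho(f,\bar f)<\epsilon$. The fat-shattering dimension $d_{\mathcal{G}_0}(\epsilon)$ is the maximal cardinality of a set $\{x_1,\dots,x_n\}$ for which there is a witness $s$ such that for every $(b_i)\in\{-1,1\}^n$ some $f\in\mathcal{G}_0$ satisfies $b_i(f(x_i)-s(x_i))\ge\epsilon$ for all $i$; it is assumed that $d_{\mathcal{G}_0}(\epsilon/384)\ge1$. *)

theory Defs
  imports "HOL-Analysis.Analysis" "HOL-Library.Extended_Nat"
begin

text \<open>Input domain X = [0,A]^d, modelled with a finite index type 'd.\<close>
definition cube :: "real \<Rightarrow> (real^'d) set" where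
  "cube A = {x. \<forall>i. 0 \<le> x $ i \<and> x $ i \<le> A}"

definition Zset :: "real \<Rightarrow> nat \<Rightarrow> ((real^'d) \<times> nat) set" where
  "Zset A C = cube A \<times> {1..C}"

definition prod_class :: "nat \<Rightarrow> ('x \<Rightarrow> real) set \<Rightarrow> (nat \<Rightarrow> 'x \<Rightarrow> real) set" where
  "prod_class C G0 = {g. \<forall>k\<in>{1..C}. g k \<in> G0}"

definition margin_fun :: "nat \<Rightarrow> real \<Rightarrow> (nat \<Rightarrow> 'x \<Rightarrow> real) \<Rightarrow> 'x \<times> nat \<Rightarrow> real" where
  "margin_fun C \<gamma> g z = (case z of (x, y) \<Rightarrow>
     max 0 (min \<gamma> ((g y x - Max {g k x | k. k \<in> {1..C} \<and> k \<noteq> y}) / 2)))"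

definition margin_class :: "nat \<Rightarrow> real \<Rightarrow> (nat \<Rightarrow> 'x \<Rightarrow> real) set \<Rightarrow> ('x \<times> nat \<Rightarrow> real) set" where
  "margin_class C \<gamma> G = margin_fun C \<gamma> ` G"

definition d2 :: "nat \<Rightarrow> (nat \<Rightarrow> 'z) \<Rightarrow> ('z \<Rightarrow> real) \<Rightarrow> ('z \<Rightarrow> real) \<Rightarrow> real" where
  "d2 n z f f' = sqrt ((1 / real n) * (\<Sum>i<n. \<bar>f (z i) - f' (z i)\<bar>^2))"

text \<open>Covering number: least cardinality of an internal eps-cover (\<infinity> if none is finite).\<close>
definition covering_number :: "real \<Rightarrow> ('a set) \<Rightarrow> ('a \<Rightarrow> 'a \<Rightarrow> real) \<Rightarrow> enat" where
  "covering_number eps F \<rho> =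
     Inf {enat (card S) | S. finite S \<and> S \<subseteq> F \<and> (\<forall>f\<in>F. \<exists>g\<in>S. \<rho> f g < eps)}"

definition fat_shatters :: "('x \<Rightarrow> real) set \<Rightarrow> 'x set \<Rightarrow> real \<Rightarrow> 'x set \<Rightarrow> bool" where
  "fat_shatters G0 X eps S \<longleftrightarrow> finite S \<and> S \<subseteq> X \<and>
     (\<exists>s. \<forall>B \<subseteq> S. \<exists>f\<in>G0. \<forall>x\<in>S.
        (x \<in> B \<longrightarrow> f x - s x \<ge> eps) \<and> (x \<notin> B \<longrightarrow> s x - f x \<ge> eps))"

definition fat_dim :: "('x \<Rightarrow> real) set \<Rightarrow> 'x set \<Rightarrow> real \<Rightarrow> enat" where
  "fat_dim G0 X eps = Sup {enat (card S) | S. fat_shatters G0 X eps S}"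

end

theory Submission
  imports Defs
begin

text \<open>It suffices to bound the size of a finite \<open>\<epsilon>\<close>-separated subset \<open>P\<close> of the margin class,
  since a maximal one is an \<open>\<epsilon>\<close>-cover. Subsampling about \<open>ln |P| / \<epsilon>\<^sup>2\<close> of the sample
  points keeps every pair of \<open>P\<close> at distance \<open>\<epsilon>/2\<close> at some subsample point, hence at some
  component. Quantizing representatives of \<open>P\<close> with step \<open>\<epsilon>/6\<close> on these \<open>N\<close> points and \<open>C\<close>
  components gives a pairwise \<open>2\<close>-separated class of functions into \<open>{0..b}\<close>. By the counting
  argument of Alon, Ben-David, Cesa-Bianchi and Haussler, such a class with at least \<open>Q\<^sup>k\<close>
  members, \<open>Q = (N + 1) (b + 1)\<close>, strongly shatters at least \<open>2\<^sup>k\<close> pairs (set, witness); on the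
  other hand a strongly shattered set splits into \<open>C\<close> sets fat-shattered by \<open>G0\<close>, so there are
  at most \<open>Q\<^bsup>C d\<^esup>\<close> of them. Hence \<open>ln |P| \<le> 4 C d ln\<^sup>2 Q\<close> with \<open>Q \<le> 42 C M ln |P| / \<epsilon>\<^sup>3\<close>,
  and this implicit inequality is solved for \<open>ln |P|\<close>.\<close>

section \<open>Strong shattering by integer-valued classes\<close>

definition two_separated :: "'a set \<Rightarrow> ('a \<Rightarrow> nat) set \<Rightarrow> bool" where
  "two_separated \<Omega> H \<longleftrightarrow>
     (\<forall>h\<in>H. \<forall>h'\<in>H. h \<noteq> h' \<longrightarrow> (\<exists>x\<in>\<Omega>. h' x + 2 \<le> h x \<or> h x + 2 \<le> h' x))"

definition strongly_shatters :: "('a \<Rightarrow> nat) set \<Rightarrow> 'a set \<Rightarrow> ('a \<Rightarrow> nat) \<Rightarrow> bool" where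
  "strongly_shatters H S r \<longleftrightarrow>
     (\<forall>B\<subseteq>S. \<exists>h\<in>H. \<forall>y\<in>S. (y \<in> B \<longrightarrow> r y + 1 \<le> h y) \<and> (y \<notin> B \<longrightarrow> h y + 1 \<le> r y))"

text \<open>The witness \<open>r\<close> is normalised to vanish outside \<open>S\<close>, so that each shattered set is
  counted once per witness restricted to it.\<close>
definition strongly_shattered :: "'a set \<Rightarrow> ('a \<Rightarrow> nat) set \<Rightarrow> ('a set \<times> ('a \<Rightarrow> nat)) set" where
  "strongly_shattered \<Omega> H =
     {(S, r). S \<subseteq> \<Omega> \<and> (\<forall>y. y \<notin> S \<longrightarrow> r y = 0) \<and> strongly_shatters H S r}"

lemma strongly_shatters_mono: "strongly_shatters H S r \<Longrightarrow> H \<subseteq> H' \<Longrightarrow> strongly_shatters H' S r"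
  unfolding strongly_shatters_def by blast

lemma strongly_shatters_witness_less:
  assumes "strongly_shatters H S r" and "\<forall>h\<in>H. h y \<le> b" and "y \<in> S"
  shows "r y < b"
proof -
  from assms(1) obtain h where "h \<in> H" "\<forall>y\<in>S. r y + 1 \<le> h y"
    unfolding strongly_shatters_def by blast
  with assms(2,3) show ?thesis by fastforce
qed

lemma finite_strongly_shattered:
  assumes "finite \<Omega>" and bounded: "\<forall>h\<in>H. \<forall>y\<in>\<Omega>. h y \<le> b"
  shows "finite (strongly_shattered \<Omega> H)"
proof -
  let ?R = "{r. \<forall>x. (x \<in> \<Omega> \<longrightarrow> r x \<in> {..b}) \<and> (x \<notin> \<Omega> \<longrightarrow> r x = 0)}"
  have "strongly_shattered \<Omega> H \<subseteq> Pow \<Omega> \<times> ?R"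
  proof clarify
    fix S r assume "(S, r) \<in> strongly_shattered \<Omega> H"
    then have S: "S \<subseteq> \<Omega>" "\<forall>y. y \<notin> S \<longrightarrow> r y = 0" "strongly_shatters H S r"
      unfolding strongly_shattered_def by auto
    have "r x \<le> b" if "x \<in> \<Omega>" for x
      using S strongly_shatters_witness_less[OF S(3), of x b] bounded that
      by (cases "x \<in> S") auto
    with S show "S \<in> Pow \<Omega> \<and> r \<in> ?R" by auto
  qed
  moreover have "finite (Pow \<Omega> \<times> ?R)"
    using assms(1) by (intro finite_cartesian_product finite_set_of_finite_funs) auto
  ultimately show ?thesis by (rule finite_subset)
qed

lemma two_separated_large_fibres:
  fixes N b K :: nat
  assumes "N \<ge> 1" "K \<ge> 1" and \<Omega>: "finite \<Omega>" "card \<Omega> \<le> N"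
    and bounded: "\<forall>h\<in>H. \<forall>y\<in>\<Omega>. h y \<le> b" and sep: "two_separated \<Omega> H" and "finite H"
    and large: "(N * (b + 1) + 1) * K \<le> card H"
  shows "\<exists>x\<in>\<Omega>. \<exists>i j. j + 2 \<le> i \<and> K \<le> card {h\<in>H. h x = i} \<and> K \<le> card {h\<in>H. h x = j}"
proof (rule ccontr)
  assume no_pair: "\<not> ?thesis"
  define small where "small = (\<Union>x\<in>\<Omega>. \<Union>v\<in>{v. v \<le> b \<and> card {h\<in>H. h x = v} < K}. {h\<in>H. h x = v})"
  have "card small \<le> (\<Sum>x\<in>\<Omega>. \<Sum>v\<in>{v. v \<le> b \<and> card {h\<in>H. h x = v} < K}. card {h\<in>H. h x = v})"
    unfolding small_def using \<Omega>(1)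
    by (intro order_trans[OF card_UN_le] sum_mono card_UN_le) auto
  also have "\<dots> \<le> (\<Sum>x\<in>\<Omega>. \<Sum>v\<in>{v. v \<le> b \<and> card {h\<in>H. h x = v} < K}. K - 1)"
    by (intro sum_mono) auto
  also have "\<dots> \<le> (\<Sum>x\<in>\<Omega>. \<Sum>v\<in>{..b}. K - 1)"
    by (intro sum_mono sum_mono2) auto
  also have "\<dots> \<le> N * ((b + 1) * (K - 1))"
    using \<Omega>(2) by simp
  finally have card_small: "card small \<le> N * ((b + 1) * (K - 1))" .
  have "card (H - small) \<le> 1"
  proof -
    have large_fibre: "K \<le> card {h\<in>H. h x = g x}" if "g \<in> H - small" "x \<in> \<Omega>" for g x
      using that bounded unfolding small_def by force
    have "h = h'" if "h \<in> H - small" "h' \<in> H - small" for h h'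
    proof (rule ccontr)
      assume "h \<noteq> h'"
      with sep that obtain x where "x \<in> \<Omega>" "h' x + 2 \<le> h x \<or> h x + 2 \<le> h' x"
        unfolding two_separated_def by blast
      with large_fibre[OF that(1)] large_fibre[OF that(2)] no_pair show False by blast
    qed
    then show ?thesis using \<open>finite H\<close> by (simp add: card_le_Suc0_iff_eq)
  qed
  then have "card H \<le> 1 + N * ((b + 1) * (K - 1))"
    using card_small card_Un_le[of "H - small" small] card_mono[of "(H - small) \<union> small" H]
      \<open>finite H\<close> small_def \<Omega>(1) by fastforce
  also have "\<dots> < (N * (b + 1) + 1) * K"
    using assms(1,2) by (cases K) (auto simp: algebra_simps)
  finally show False using large by linarith
qed

lemma strongly_shatters_insert:
  assumes "x \<notin> S" and "j + 2 \<le> i"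
    and "strongly_shatters {h\<in>H. h x = i} S r" and "strongly_shatters {h\<in>H. h x = j} S r"
  shows "strongly_shatters H (insert x S) (r(x := j + 1))"
  unfolding strongly_shatters_def
proof (intro allI impI)
  fix B assume B: "B \<subseteq> insert x S"
  show "\<exists>h\<in>H. \<forall>y\<in>insert x S. (y \<in> B \<longrightarrow> (r(x := j + 1)) y + 1 \<le> h y)
                              \<and> (y \<notin> B \<longrightarrow> h y + 1 \<le> (r(x := j + 1)) y)"
  proof (cases "x \<in> B")
    case True
    from B have "B - {x} \<subseteq> S" by blast
    with assms(3) obtain h where "h \<in> H" "h x = i"
      "\<forall>y\<in>S. (y \<in> B - {x} \<longrightarrow> r y + 1 \<le> h y) \<and> (y \<notin> B - {x} \<longrightarrow> h y + 1 \<le> r y)"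
      unfolding strongly_shatters_def by blast
    with True assms(1,2) show ?thesis by (intro bexI[of _ h]) auto
  next
    case False
    with B have "B \<subseteq> S" by blast
    with assms(4) obtain h where "h \<in> H" "h x = j"
      "\<forall>y\<in>S. (y \<in> B \<longrightarrow> r y + 1 \<le> h y) \<and> (y \<notin> B \<longrightarrow> h y + 1 \<le> r y)"
      unfolding strongly_shatters_def by blast
    with False assms(1) show ?thesis by (intro bexI[of _ h]) auto
  qed
qed

lemma two_separated_fibre:
  assumes "two_separated \<Omega> H"
  shows "two_separated (\<Omega> - {x}) {h\<in>H. h x = v}"
  unfolding two_separated_def
proof (intro ballI impI)
  fix h h' assume h: "h \<in> {h\<in>H. h x = v}" "h' \<in> {h\<in>H. h x = v}" "h \<noteq> h'"
  with assms obtain y where "y \<in> \<Omega>" "h' y + 2 \<le> h y \<or> h y + 2 \<le> h' y"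
    unfolding two_separated_def by blast
  moreover from h have "y \<noteq> x" if "h' y + 2 \<le> h y \<or> h y + 2 \<le> h' y" using that by auto
  ultimately show "\<exists>y\<in>\<Omega> - {x}. h' y + 2 \<le> h y \<or> h y + 2 \<le> h' y" by blast
qed

text \<open>A pair shattered by both fibres is shattered a second time, with \<open>x\<close> added, by \<open>H\<close>.\<close>
lemma card_strongly_shattered_fibres_le:
  assumes "finite \<Omega>" and bounded: "\<forall>h\<in>H. \<forall>y\<in>\<Omega>. h y \<le> b" and "x \<in> \<Omega>" "j + 2 \<le> i"
  shows "card (strongly_shattered (\<Omega> - {x}) {h\<in>H. h x = i})
           + card (strongly_shattered (\<Omega> - {x}) {h\<in>H. h x = j})
         \<le> card (strongly_shattered \<Omega> H)"
proof -
  define A1 where "A1 = strongly_shattered (\<Omega> - {x}) {h\<in>H. h x = i}"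
  define A2 where "A2 = strongly_shattered (\<Omega> - {x}) {h\<in>H. h x = j}"
  define extend where "extend = (\<lambda>(S, r). (insert x S, r(x := j + 1)))"
  have fin: "finite A1" "finite A2"
    unfolding A1_def A2_def using assms(1) bounded
    by (auto intro!: finite_strongly_shattered[where b = b])
  have x_notin: "x \<notin> S" "r x = 0" if "(S, r) \<in> A1 \<union> A2" for S r
    using that unfolding A1_def A2_def strongly_shattered_def by auto
  have "A1 \<union> A2 \<subseteq> strongly_shattered \<Omega> H"
    unfolding A1_def A2_def strongly_shattered_def
    by (auto elim: strongly_shatters_mono)
  moreover have "extend ` (A1 \<inter> A2) \<subseteq> strongly_shattered \<Omega> H"
  proof (rule image_subsetI)
    fix p assume p: "p \<in> A1 \<inter> A2"
    obtain S r where "p = (S, r)" by fastforce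
    with p have S: "S \<subseteq> \<Omega> - {x}" "\<forall>y. y \<notin> S \<longrightarrow> r y = 0"
      and sh: "strongly_shatters {h\<in>H. h x = i} S r" "strongly_shatters {h\<in>H. h x = j} S r"
      and "extend p = (insert x S, r(x := j + 1))"
      unfolding A1_def A2_def strongly_shattered_def extend_def by auto
    moreover have "strongly_shatters H (insert x S) (r(x := j + 1))"
      using S(1) assms(4) sh by (intro strongly_shatters_insert) auto
    ultimately show "extend p \<in> strongly_shattered \<Omega> H"
      using assms(3) unfolding strongly_shattered_def by auto
  qed
  moreover have "(A1 \<union> A2) \<inter> extend ` (A1 \<inter> A2) = {}"
    using x_notin unfolding extend_def by fastforce
  moreover have "inj_on extend (A1 \<inter> A2)"
  proof (rule inj_onI)
    fix p p' assume "p \<in> A1 \<inter> A2" "p' \<in> A1 \<inter> A2" and eq: "extend p = extend p'"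
    moreover obtain S r S' r' where "p = (S, r)" "p' = (S', r')" by fastforce
    ultimately have "x \<notin> S" "x \<notin> S'" "r x = 0" "r' x = 0" "insert x S = insert x S'"
      "r(x := j + 1) = r'(x := j + 1)" and pq: "p = (S, r)" "p' = (S', r')"
      using x_notin unfolding extend_def by auto
    then have "S = S'" by (metis Diff_insert_absorb)
    moreover have "r = r'"
    proof
      fix y show "r y = r' y"
        using fun_cong[OF \<open>r(x := j + 1) = r'(x := j + 1)\<close>, of y] \<open>r x = 0\<close> \<open>r' x = 0\<close>
        by (cases "y = x") auto
    qed
    ultimately show "p = p'" using pq by simp
  qed
  ultimately have sub: "(A1 \<union> A2) \<union> extend ` (A1 \<inter> A2) \<subseteq> strongly_shattered \<Omega> H"
    and disj: "(A1 \<union> A2) \<inter> extend ` (A1 \<inter> A2) = {}" and inj: "inj_on extend (A1 \<inter> A2)"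
    by auto
  have "card A1 + card A2 = card (A1 \<union> A2) + card (extend ` (A1 \<inter> A2))"
    using card_Un_Int[OF fin] card_image[OF inj] by simp
  also have "\<dots> = card ((A1 \<union> A2) \<union> extend ` (A1 \<inter> A2))"
    using fin disj by (simp add: card_Un_disjoint)
  also have "\<dots> \<le> card (strongly_shattered \<Omega> H)"
    using finite_strongly_shattered[OF assms(1,2)] sub by (rule card_mono)
  finally show ?thesis unfolding A1_def A2_def .
qed

lemma card_strongly_shattered_ge:
  fixes N b :: nat
  assumes "N \<ge> 1" "finite \<Omega>" "card \<Omega> \<le> N" "\<forall>h\<in>H. \<forall>y\<in>\<Omega>. h y \<le> b"
    "two_separated \<Omega> H" "finite H" "(N * (b + 1) + 1) ^ k \<le> card H"
  shows "2 ^ k \<le> card (strongly_shattered \<Omega> H)"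
  using assms(2-)
proof (induction k arbitrary: \<Omega> H)
  case 0
  then obtain h where "h \<in> H" by fastforce
  then have "({}, \<lambda>_. 0) \<in> strongly_shattered \<Omega> H"
    unfolding strongly_shattered_def strongly_shatters_def by auto
  with finite_strongly_shattered[OF "0.prems"(1,3)] show ?case
    by (simp add: Suc_le_eq card_gt_0_iff) blast
next
  case (Suc k)
  define K where "K = (N * (b + 1) + 1) ^ k"
  have "K \<ge> 1" "(N * (b + 1) + 1) * K \<le> card H"
    using Suc.prems(6) unfolding K_def by simp_all
  from two_separated_large_fibres[OF assms(1) this(1) Suc.prems(1-5) this(2)]
  obtain x i j where x: "x \<in> \<Omega>" "j + 2 \<le> i"
    and large: "K \<le> card {h\<in>H. h x = i}" "K \<le> card {h\<in>H. h x = j}"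
    by blast
  have "2 ^ k \<le> card (strongly_shattered (\<Omega> - {x}) {h\<in>H. h x = v})"
    if "K \<le> card {h\<in>H. h x = v}" for v
  proof (rule Suc.IH)
    show "card (\<Omega> - {x}) \<le> N" using Suc.prems(2) card_Diff1_le[of \<Omega> x] by linarith
    show "two_separated (\<Omega> - {x}) {h\<in>H. h x = v}"
      using Suc.prems(4) by (rule two_separated_fibre)
    show "(N * (b + 1) + 1) ^ k \<le> card {h\<in>H. h x = v}" using that unfolding K_def .
  qed (use Suc.prems in auto)
  from this[OF large(1)] this[OF large(2)]
    card_strongly_shattered_fibres_le[OF Suc.prems(1,3) x]
  show ?case by simp
qed

lemma sum_powers_le_Suc_power: "(\<Sum>i\<le>D. (N::nat) ^ i) \<le> (N + 1) ^ D"
proof (induction D)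
  case (Suc D)
  have "(\<Sum>i\<le>Suc D. N ^ i) = 1 + N * (\<Sum>i\<le>D. N ^ i)"
    by (subst sum.atMost_Suc_shift) (simp add: sum_distrib_left)
  also have "\<dots> \<le> 1 + N * (N + 1) ^ D" using Suc by simp
  also have "\<dots> \<le> (N + 1) ^ Suc D" by (simp add: algebra_simps)
  finally show ?case .
qed simp

lemma card_subsets_card_le:
  assumes "finite \<Omega>"
  shows "card {S. S \<subseteq> \<Omega> \<and> card S \<le> D} \<le> (card \<Omega> + 1) ^ D"
proof -
  let ?L = "{xs. set xs \<subseteq> \<Omega> \<and> length xs \<le> D}"
  have fin: "finite ?L" using assms by (rule finite_lists_length_le)
  have "{S. S \<subseteq> \<Omega> \<and> card S \<le> D} \<subseteq> set ` ?L"
  proof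
    fix S assume S: "S \<in> {S. S \<subseteq> \<Omega> \<and> card S \<le> D}"
    then obtain xs where "set xs = S" "distinct xs"
      using finite_distinct_list finite_subset assms by blast
    with S show "S \<in> set ` ?L" using distinct_card[of xs] by auto
  qed
  then have "card {S. S \<subseteq> \<Omega> \<and> card S \<le> D} \<le> card (set ` ?L)"
    using fin by (intro card_mono) auto
  also have "\<dots> \<le> card ?L" using fin by (rule card_image_le)
  also have "\<dots> = (\<Sum>i\<le>D. card \<Omega> ^ i)" using assms by (rule card_lists_length_le)
  also have "\<dots> \<le> (card \<Omega> + 1) ^ D" by (rule sum_powers_le_Suc_power)
  finally show ?thesis .
qed

lemma card_strongly_shattered_le:
  assumes "finite \<Omega>" and bounded: "\<forall>h\<in>H. \<forall>y\<in>\<Omega>. h y \<le> b"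
    and dim: "\<And>S r. S \<subseteq> \<Omega> \<Longrightarrow> strongly_shatters H S r \<Longrightarrow> card S \<le> D"
  shows "card (strongly_shattered \<Omega> H) \<le> ((card \<Omega> + 1) * (b + 1)) ^ D"
proof -
  define SS where "SS = {S. S \<subseteq> \<Omega> \<and> card S \<le> D}"
  define R where "R S = (\<lambda>g y. if y \<in> S then g y else 0) ` (S \<rightarrow>\<^sub>E {..b})" for S :: "'a set"
  have fin_S: "finite S" if "S \<in> SS" for S
    using that assms(1) finite_subset unfolding SS_def by auto
  have fin_R: "finite (R S)" if "S \<in> SS" for S
    unfolding R_def using fin_S[OF that] by (intro finite_imageI finite_PiE) auto
  have "strongly_shattered \<Omega> H \<subseteq> (\<Union>S\<in>SS. {S} \<times> R S)"
  proof clarify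
    fix S r assume "(S, r) \<in> strongly_shattered \<Omega> H"
    then have S: "S \<subseteq> \<Omega>" "\<forall>y. y \<notin> S \<longrightarrow> r y = 0" "strongly_shatters H S r"
      unfolding strongly_shattered_def by auto
    have "r y \<le> b" if "y \<in> S" for y
      using strongly_shatters_witness_less[OF S(3), of y b] bounded S(1) that by fastforce
    then have "restrict r S \<in> S \<rightarrow>\<^sub>E {..b}" by simp
    moreover have "r = (\<lambda>y. if y \<in> S then restrict r S y else 0)" using S(2) by auto
    ultimately have "r \<in> R S" unfolding R_def by blast
    moreover have "S \<in> SS" unfolding SS_def using S dim by auto
    ultimately show "(S, r) \<in> (\<Union>S\<in>SS. {S} \<times> R S)" by blast
  qed
  have fin_SS: "finite SS" unfolding SS_def using assms(1) by auto
  have "card (strongly_shattered \<Omega> H) \<le> card (\<Union>S\<in>SS. {S} \<times> R S)"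
    using fin_SS fin_R by (intro card_mono[OF _ \<open>strongly_shattered \<Omega> H \<subseteq> _\<close>]) auto
  also have "\<dots> \<le> (\<Sum>S\<in>SS. card ({S} \<times> R S))" using fin_SS by (rule card_UN_le)
  also have "\<dots> \<le> (\<Sum>S\<in>SS. (b + 1) ^ D)"
  proof (rule sum_mono)
    fix S assume S: "S \<in> SS"
    have "card ({S} \<times> R S) \<le> card (S \<rightarrow>\<^sub>E {..b})"
      unfolding R_def card_cartesian_product_singleton
      using fin_S[OF S] by (intro card_image_le finite_PiE) auto
    also have "\<dots> = (b + 1) ^ card S" using fin_S[OF S] by (simp add: card_PiE)
    also have "\<dots> \<le> (b + 1) ^ D" using S unfolding SS_def by (intro power_increasing) auto
    finally show "card ({S} \<times> R S) \<le> (b + 1) ^ D" .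
  qed
  also have "\<dots> \<le> (card \<Omega> + 1) ^ D * (b + 1) ^ D"
    using card_subsets_card_le[OF assms(1), of D] unfolding SS_def by simp
  finally show ?thesis by (simp only: power_mult_distrib)
qed

lemma one_le_ln: "3 \<le> x \<Longrightarrow> 1 \<le> ln (x::real)"
  using exp_le by (subst ln_ge_iff) auto

lemma ln_le_of_less_power_ceiling_log:
  fixes Q p D :: nat
  assumes "Q \<ge> 4" "D \<ge> 1" "p > 0" and less: "p < Q ^ (D * nat \<lceil>log 2 Q\<rceil> + 1)"
  shows "ln p \<le> 4 * real D * (ln Q)\<^sup>2"
proof -
  define L where "L = ln Q"
  define k where "k = nat \<lceil>log 2 Q\<rceil>"
  have L: "1 \<le> L" unfolding L_def using assms(1) by (intro one_le_ln) simp
  have "real p < real Q ^ (D * k + 1)"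
    using less unfolding k_def by (metis of_nat_less_iff of_nat_power)
  then have "ln p < ln (real Q ^ (D * k + 1))"
    using assms(3) by (intro ln_less_cancel_iff[THEN iffD2]) auto
  also have "\<dots> = real (D * k + 1) * L" unfolding L_def by (rule ln_realpow)
  finally have "ln p < real D * real k * L + L" by (simp add: algebra_simps)
  moreover have "real k \<le> 3/2 * L + 1"
  proof -
    have "0 \<le> log 2 Q" using assms(1) by simp
    then have "real k \<le> log 2 Q + 1" unfolding k_def by linarith
    moreover have "log 2 Q \<le> 3/2 * L"
      unfolding L_def log_def using ln2_ge_two_thirds L[unfolded L_def] by (simp add: field_simps)
    ultimately show ?thesis by linarith
  qed
  then have "real D * real k \<le> D * (3/2 * L + 1)" by (rule mult_left_mono) simp
  then have "real D * real k * L \<le> D * (3/2 * L + 1) * L" by (rule mult_right_mono) (use L in simp)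
  moreover have "D * (3/2 * L + 1) * L + L \<le> 4 * real D * L\<^sup>2"
  proof -
    have "L \<le> L\<^sup>2" "L \<le> D * L" using L assms(2) by (simp_all add: power2_eq_square)
    moreover have "D * L \<le> D * L\<^sup>2" using \<open>L \<le> L\<^sup>2\<close> by (simp add: mult_left_mono)
    moreover have "0 \<le> D * L\<^sup>2" by simp
    moreover have "D * (3/2 * L + 1) * L + L = 3/2 * (D * L\<^sup>2) + D * L + L"
      by (simp add: algebra_simps power2_eq_square)
    ultimately show ?thesis by (simp only: mult.assoc)
  qed
  ultimately show ?thesis unfolding L_def by linarith
qed

lemma ln_card_two_separated_le:
  fixes N b D :: nat
  assumes "N \<ge> 3" "D \<ge> 1" "finite \<Omega>" "card \<Omega> \<le> N" and bounded: "\<forall>h\<in>H. \<forall>y\<in>\<Omega>. h y \<le> b"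
    and "two_separated \<Omega> H" "finite H"
    and dim: "\<And>S r. S \<subseteq> \<Omega> \<Longrightarrow> strongly_shatters H S r \<Longrightarrow> card S \<le> D"
  shows "ln (card H) \<le> 4 * real D * (ln ((N + 1) * (b + 1)))\<^sup>2"
proof (cases "card H = 0")
  case False
  define Q where "Q = (N + 1) * (b + 1)"
  define k where "k = nat \<lceil>log 2 Q\<rceil>"
  have "N + 1 \<le> Q" unfolding Q_def by simp
  then have "Q \<ge> 4" using assms(1) by linarith
  have "card (strongly_shattered \<Omega> H) \<le> ((card \<Omega> + 1) * (b + 1)) ^ D"
    using assms(3) bounded dim by (rule card_strongly_shattered_le)
  also have "\<dots> \<le> Q ^ D"
    unfolding Q_def using assms(4) by (intro power_mono mult_le_mono1) auto
  also have "\<dots> \<le> (2 ^ k) ^ D"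
  proof (intro power_mono)
    have "real Q = 2 powr (log 2 Q)" using \<open>Q \<ge> 4\<close> by simp
    also have "\<dots> \<le> 2 powr (real k)"
      unfolding k_def by (intro powr_mono) (auto simp: real_nat_ceiling_ge)
    finally show "Q \<le> 2 ^ k" by (simp add: powr_realpow flip: of_nat_le_iff)
  qed simp
  finally have "card (strongly_shattered \<Omega> H) \<le> 2 ^ (D * k)"
    by (simp add: power_mult[symmetric] mult.commute)
  then have upper: "card (strongly_shattered \<Omega> H) < 2 ^ (D * k + 1)"
    by (rule le_less_trans) simp
  have "card H < Q ^ (D * k + 1)"
  proof (rule ccontr)
    assume "\<not> ?thesis"
    moreover have "(N * (b + 1) + 1) ^ (D * k + 1) \<le> Q ^ (D * k + 1)"
      unfolding Q_def by (intro power_mono) (simp_all add: algebra_simps)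
    ultimately have "2 ^ (D * k + 1) \<le> card (strongly_shattered \<Omega> H)"
      using assms(1) by (intro card_strongly_shattered_ge[OF _ assms(3,4) bounded assms(6,7)]) auto
    with upper show False by simp
  qed
  with \<open>Q \<ge> 4\<close> assms(2) False show ?thesis
    unfolding Q_def k_def by (intro ln_le_of_less_power_ceiling_log) auto
qed simp

section \<open>Subsampling\<close>

lemma card_PiE_avoiding_le:
  fixes q :: real
  assumes "T \<subseteq> {..<n}" "q * n \<le> card T" "0 \<le> q"
  shows "real (card ({..<m} \<rightarrow>\<^sub>E {..<n} - T)) \<le> real n ^ m * exp (- q * m)"
proof -
  have "card T \<le> n" using assms(1) card_mono[of "{..<n}" T] by simp
  then have "q * n \<le> n" using assms(2) by linarith
  have "real (card ({..<m} \<rightarrow>\<^sub>E {..<n} - T)) = (real n - card T) ^ m"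
    using assms(1) \<open>card T \<le> n\<close>
    by (simp add: card_PiE card_Diff_subset finite_subset)
  also have "\<dots> \<le> (real n * (1 - q)) ^ m"
    using assms(2) \<open>card T \<le> n\<close> by (intro power_mono) (auto simp: algebra_simps)
  also have "\<dots> \<le> (real n * exp (- q)) ^ m"
    using exp_ge_add_one_self[of "- q"] \<open>q * n \<le> n\<close>
    by (intro power_mono mult_left_mono) (auto simp: algebra_simps)
  also have "\<dots> = real n ^ m * exp (- q * m)"
    by (simp add: power_mult_distrib exp_of_nat_mult[symmetric] mult.commute)
  finally show ?thesis .
qed

text \<open>Union bound: a uniformly random \<open>m\<close>-tuple of indices misses the \<open>\<ge> q n\<close> separating indices
  of a fixed pair with probability \<open>\<le> exp (- q m)\<close>, and there are fewer than \<open>exp (q m)\<close> pairs.\<close>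
lemma exists_separating_subsample:
  fixes P :: "('z \<Rightarrow> real) set" and z :: "nat \<Rightarrow> 'z" and \<delta> q :: real and m n :: nat
  assumes "finite P" "n > 0" "0 \<le> q"
    and sep: "\<forall>f\<in>P. \<forall>f'\<in>P. f \<noteq> f' \<longrightarrow> q * n \<le> card {i\<in>{..<n}. \<delta> \<le> \<bar>f (z i) - f' (z i)\<bar>}"
    and "real (card P) ^ 2 < exp (q * m)"
  shows "\<exists>s. (\<forall>j<m. s j < n) \<and>
           (\<forall>f\<in>P. \<forall>f'\<in>P. f \<noteq> f' \<longrightarrow> (\<exists>j<m. \<delta> \<le> \<bar>f (z (s j)) - f' (z (s j))\<bar>))"
proof (rule ccontr)
  assume none: "\<not> ?thesis"
  define T where "T f f' = {i\<in>{..<n}. \<delta> \<le> \<bar>f (z i) - f' (z i)\<bar>}" for f f' :: "'z \<Rightarrow> real"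
  define Pairs where "Pairs = {(f, f') \<in> P \<times> P. f \<noteq> f'}"
  define Bad where "Bad p = {..<m} \<rightarrow>\<^sub>E {..<n} - T (fst p) (snd p)" for p
  have "Pairs \<subseteq> P \<times> P" unfolding Pairs_def by auto
  then have fin: "finite Pairs" by (rule finite_subset) (use assms(1) in simp)
  have "card Pairs \<le> card (P \<times> P)"
    using assms(1) \<open>Pairs \<subseteq> P \<times> P\<close> by (intro card_mono) simp_all
  then have "real (card Pairs) \<le> real (card P) ^ 2"
    by (simp add: card_cartesian_product power2_eq_square flip: of_nat_mult)
  have "{..<m} \<rightarrow>\<^sub>E {..<n} \<subseteq> (\<Union>p\<in>Pairs. Bad p)"
  proof
    fix s assume s: "s \<in> {..<m} \<rightarrow>\<^sub>E {..<n}"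
    with none obtain f f' where "f \<in> P" "f' \<in> P" "f \<noteq> f'"
      "\<forall>j<m. \<not> \<delta> \<le> \<bar>f (z (s j)) - f' (z (s j))\<bar>"
      by auto
    with s have "(f, f') \<in> Pairs" "s \<in> Bad (f, f')"
      unfolding Pairs_def Bad_def T_def by (auto simp: PiE_iff)
    then show "s \<in> (\<Union>p\<in>Pairs. Bad p)" by blast
  qed
  moreover have "finite (\<Union>p\<in>Pairs. Bad p)"
    using fin unfolding Bad_def by (auto intro!: finite_PiE)
  ultimately have "card ({..<m} \<rightarrow>\<^sub>E {..<n}) \<le> card (\<Union>p\<in>Pairs. Bad p)"
    by (intro card_mono)
  then have "n ^ m \<le> card (\<Union>p\<in>Pairs. Bad p)" by (simp add: card_PiE)
  also have "\<dots> \<le> (\<Sum>p\<in>Pairs. card (Bad p))" using fin by (rule card_UN_le)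
  finally have "real n ^ m \<le> (\<Sum>p\<in>Pairs. real (card (Bad p)))"
    unfolding of_nat_sum[symmetric] of_nat_power[symmetric] of_nat_le_iff .
  also have "\<dots> \<le> (\<Sum>p\<in>Pairs. real n ^ m * exp (- q * m))"
  proof (rule sum_mono)
    fix p assume "p \<in> Pairs"
    then show "real (card (Bad p)) \<le> real n ^ m * exp (- q * m)"
      using sep assms(3) unfolding Bad_def
      by (intro card_PiE_avoiding_le) (auto simp: T_def Pairs_def)
  qed
  also have "\<dots> \<le> real (card P) ^ 2 * (real n ^ m * exp (- q * m))"
    using \<open>real (card Pairs) \<le> real (card P) ^ 2\<close> by (simp add: mult_right_mono)
  also have "\<dots> < exp (q * m) * (real n ^ m * exp (- q * m))"
    using assms(2,5) by (intro mult_strict_right_mono) auto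
  also have "\<dots> = real n ^ m" by (simp add: exp_minus field_simps)
  finally show False by simp
qed

section \<open>Margin functions and covering numbers\<close>

lemma Max_image_diff_le:
  fixes f f' :: "'i \<Rightarrow> real"
  assumes "finite I" "I \<noteq> {}" "\<forall>k\<in>I. \<bar>f k - f' k\<bar> \<le> \<delta>"
  shows "\<bar>Max (f ` I) - Max (f' ` I)\<bar> \<le> \<delta>"
proof -
  have "Max (g ` I) \<le> Max (g' ` I) + \<delta>" if "\<forall>k\<in>I. \<bar>g k - g' k\<bar> \<le> \<delta>" for g g' :: "'i \<Rightarrow> real"
  proof -
    have "Max (g ` I) \<in> g ` I" using assms(1,2) by (intro Max_in) auto
    then obtain k where "k \<in> I" "Max (g ` I) = g k" by auto
    moreover have "g' k \<le> Max (g' ` I)" using \<open>k \<in> I\<close> assms(1) by auto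
    ultimately show ?thesis using that by fastforce
  qed
  from this[of f f'] this[of f' f] assms(3) show ?thesis by (auto simp: abs_minus_commute)
qed

lemma clip_diff_le: "\<bar>max 0 (min \<gamma> a) - max 0 (min \<gamma> b)\<bar> \<le> \<bar>a - b\<bar>" for a b \<gamma> :: real
  by (simp only: max_def min_def) (auto split: if_splits)

lemma margin_fun_bounds: "0 \<le> \<gamma> \<Longrightarrow> 0 \<le> margin_fun C \<gamma> g z \<and> margin_fun C \<gamma> g z \<le> \<gamma>"
  unfolding margin_fun_def by (auto split: prod.splits)

lemma margin_fun_eq:
  "margin_fun C \<gamma> g (x, y) = max 0 (min \<gamma> ((g y x - Max ((\<lambda>k. g k x) ` ({1..C} - {y}))) / 2))"
proof -
  have "{g k x | k. k \<in> {1..C} \<and> k \<noteq> y} = (\<lambda>k. g k x) ` ({1..C} - {y})" by auto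
  then show ?thesis unfolding margin_fun_def by simp
qed

lemma margin_fun_diff_le:
  fixes g g' :: "nat \<Rightarrow> 'x \<Rightarrow> real"
  assumes "C \<ge> 2" "y \<in> {1..C}" and close: "\<forall>k\<in>{1..C}. \<bar>g k x - g' k x\<bar> \<le> \<delta>"
  shows "\<bar>margin_fun C \<gamma> g (x, y) - margin_fun C \<gamma> g' (x, y)\<bar> \<le> \<delta>"
proof -
  define M where "M h = Max ((\<lambda>k. h k x) ` ({1..C} - {y}))" for h :: "nat \<Rightarrow> 'x \<Rightarrow> real"
  have "(if y = 1 then 2 else 1) \<in> {1..C} - {y}" using assms(1,2) by auto
  then have "\<bar>M g - M g'\<bar> \<le> \<delta>"
    unfolding M_def using close by (intro Max_image_diff_le) auto
  moreover have "\<bar>g y x - g' y x\<bar> \<le> \<delta>" using close assms(2) by auto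
  ultimately have "\<bar>(g y x - M g) / 2 - (g' y x - M g') / 2\<bar> \<le> \<delta>" by (simp add: abs_le_iff field_simps)
  then show ?thesis unfolding margin_fun_eq M_def[symmetric] using clip_diff_le order_trans by blast
qed

lemma exists_component_diff_ge:
  fixes g g' :: "nat \<Rightarrow> 'x \<Rightarrow> real"
  assumes "C \<ge> 2" "y \<in> {1..C}" and "t \<le> \<bar>margin_fun C \<gamma> g (x, y) - margin_fun C \<gamma> g' (x, y)\<bar>"
  shows "\<exists>k\<in>{1..C}. t \<le> \<bar>g k x - g' k x\<bar>"
proof -
  define \<delta> where "\<delta> = Max ((\<lambda>k. \<bar>g k x - g' k x\<bar>) ` {1..C})"
  have "\<delta> \<in> (\<lambda>k. \<bar>g k x - g' k x\<bar>) ` {1..C}" unfolding \<delta>_def using assms(1) by (intro Max_in) auto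
  then obtain k where "k \<in> {1..C}" "\<delta> = \<bar>g k x - g' k x\<bar>" by auto
  moreover have "\<bar>margin_fun C \<gamma> g (x, y) - margin_fun C \<gamma> g' (x, y)\<bar> \<le> \<delta>"
    using assms(1,2) unfolding \<delta>_def by (intro margin_fun_diff_le) auto
  ultimately show ?thesis using assms(3) by (intro bexI[of _ k]) auto
qed

lemma card_large_diffs_ge:
  fixes f f' :: "'z \<Rightarrow> real" and z :: "nat \<Rightarrow> 'z"
  assumes "n > 0" "0 < \<epsilon>" and "\<forall>x. \<bar>f x - f' x\<bar> \<le> 1" and "\<epsilon> \<le> d2 n z f f'"
  shows "\<epsilon>\<^sup>2 / 2 * n \<le> card {i\<in>{..<n}. \<epsilon> / 2 \<le> \<bar>f (z i) - f' (z i)\<bar>}"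
proof -
  define T where "T = {i\<in>{..<n}. \<epsilon> / 2 \<le> \<bar>f (z i) - f' (z i)\<bar>}"
  have T_sub: "T \<subseteq> {..<n}" unfolding T_def by auto
  define \<Delta> where "\<Delta> i = \<bar>f (z i) - f' (z i)\<bar>\<^sup>2" for i
  have "\<epsilon>\<^sup>2 \<le> (d2 n z f f')\<^sup>2" using assms(2,4) by (intro power_mono) auto
  also have "\<dots> = (\<Sum>i<n. \<Delta> i) / n"
    unfolding d2_def \<Delta>_def by (simp add: sum_nonneg)
  finally have "n * \<epsilon>\<^sup>2 \<le> (\<Sum>i<n. \<Delta> i)" using assms(1) by (simp add: field_simps)
  also have "\<dots> = (\<Sum>i\<in>T. \<Delta> i) + (\<Sum>i\<in>{..<n} - T. \<Delta> i)"
    using sum.subset_diff[of T "{..<n}" \<Delta>] by (simp add: T_sub add.commute)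
  also have "\<dots> \<le> card T + card ({..<n} - T) * (\<epsilon>\<^sup>2 / 4)"
  proof (intro add_mono)
    have "\<Delta> i \<le> 1" for i
      unfolding \<Delta>_def by (rule power_le_one) (use assms(3) in auto)
    then show "(\<Sum>i\<in>T. \<Delta> i) \<le> card T" using sum_mono[of T \<Delta> "\<lambda>_. 1"] by simp
    have "\<Delta> i \<le> (\<epsilon> / 2)\<^sup>2" if "i \<in> {..<n} - T" for i
      using that unfolding \<Delta>_def T_def by (intro power_mono) auto
    then show "(\<Sum>i\<in>{..<n} - T. \<Delta> i) \<le> card ({..<n} - T) * (\<epsilon>\<^sup>2 / 4)"
      using sum_mono[of "{..<n} - T" \<Delta> "\<lambda>_. (\<epsilon> / 2)\<^sup>2"] by (simp add: power_divide)
  qed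
  also have "\<dots> \<le> card T + n * (\<epsilon>\<^sup>2 / 4)"
    using card_mono[of "{..<n}" "{..<n} - T"] by (intro add_left_mono mult_right_mono) auto
  finally show ?thesis unfolding T_def[symmetric] by (simp add: field_simps)
qed

lemma covering_number_le_packing:
  fixes F :: "'a set" and \<rho> :: "'a \<Rightarrow> 'a \<Rightarrow> real" and K :: nat
  assumes "\<forall>f\<in>F. \<rho> f f < \<epsilon>" and sym: "\<forall>f g. \<rho> f g = \<rho> g f"
    and packing: "\<And>P. finite P \<Longrightarrow> P \<subseteq> F \<Longrightarrow> (\<forall>f\<in>P. \<forall>g\<in>P. f \<noteq> g \<longrightarrow> \<epsilon> \<le> \<rho> f g) \<Longrightarrow> card P \<le> K"
  shows "covering_number \<epsilon> F \<rho> \<noteq> \<infinity> \<and> the_enat (covering_number \<epsilon> F \<rho>) \<le> K"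
proof -
  define separated where
    "separated P \<longleftrightarrow> finite P \<and> P \<subseteq> F \<and> (\<forall>f\<in>P. \<forall>g\<in>P. f \<noteq> g \<longrightarrow> \<epsilon> \<le> \<rho> f g)" for P
  define sizes where "sizes = card ` {P. separated P}"
  have "sizes \<subseteq> {..K}" unfolding sizes_def separated_def using packing by auto
  then have fin: "finite sizes" by (rule finite_subset) simp
  have "card {} \<in> sizes" unfolding sizes_def separated_def by (intro image_eqI[of _ _ "{}"]) auto
  then have "Max sizes \<in> sizes" using fin by (intro Max_in) auto
  then obtain P where P: "separated P" "card P = Max sizes" unfolding sizes_def by auto
  have "\<exists>g\<in>P. \<rho> f g < \<epsilon>" if "f \<in> F" for f
  proof (rule ccontr)
    assume far: "\<not> ?thesis"
    with assms(1) that have "f \<notin> P" by blast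
    have "\<epsilon> \<le> \<rho> f g" "\<epsilon> \<le> \<rho> g f" if "g \<in> P" for g
      using far that sym[rule_format, of g f] by (auto simp: not_less)
    then have "separated (insert f P)" using P(1) that unfolding separated_def by auto
    then have "card (insert f P) \<in> sizes" unfolding sizes_def by blast
    with \<open>f \<notin> P\<close> P(1) have "card P + 1 \<in> sizes" unfolding separated_def by simp
    then have "card P + 1 \<le> Max sizes" by (rule Max_ge[OF fin])
    with P(2) show False by simp
  qed
  then have "covering_number \<epsilon> F \<rho> \<le> enat (card P)"
    unfolding covering_number_def using P(1) unfolding separated_def by (intro Inf_lower) auto
  moreover have "card P \<le> K" using P(1) packing unfolding separated_def by auto
  ultimately show ?thesis
    by (metis enat_ord_simps(1) enat_ile infinity_ileE order_trans the_enat.simps)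
qed

section \<open>Quantization\<close>

lemma nat_floor_divide_bounds:
  fixes a \<eta> :: real
  assumes "0 \<le> a" "0 < \<eta>"
  shows "real (nat \<lfloor>a / \<eta>\<rfloor>) * \<eta> \<le> a" "a < (real (nat \<lfloor>a / \<eta>\<rfloor>) + 1) * \<eta>"
proof -
  have nat_floor: "real (nat \<lfloor>a / \<eta>\<rfloor>) = real_of_int \<lfloor>a / \<eta>\<rfloor>" using assms by simp
  have "real_of_int \<lfloor>a / \<eta>\<rfloor> * \<eta> \<le> a / \<eta> * \<eta>"
    using assms(2) by (intro mult_right_mono) auto
  then show "real (nat \<lfloor>a / \<eta>\<rfloor>) * \<eta> \<le> a" using nat_floor assms(2) by simp
  have "a / \<eta> * \<eta> < (real_of_int \<lfloor>a / \<eta>\<rfloor> + 1) * \<eta>"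
    using assms(2) by (intro mult_strict_right_mono) linarith+
  then show "a < (real (nat \<lfloor>a / \<eta>\<rfloor>) + 1) * \<eta>" using nat_floor assms(2) by simp
qed

lemma nat_floor_divide_separated:
  fixes a a' \<eta> :: real
  assumes "0 \<le> a" "0 \<le> a'" "0 < \<eta>" "3 * \<eta> \<le> \<bar>a - a'\<bar>"
  shows "nat \<lfloor>a' / \<eta>\<rfloor> + 2 \<le> nat \<lfloor>a / \<eta>\<rfloor> \<or> nat \<lfloor>a / \<eta>\<rfloor> + 2 \<le> nat \<lfloor>a' / \<eta>\<rfloor>"
proof -
  have *: "nat \<lfloor>c' / \<eta>\<rfloor> + 2 \<le> nat \<lfloor>c / \<eta>\<rfloor>" if "0 \<le> c'" "c' + 3 * \<eta> \<le> c" for c c' :: real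
  proof -
    have "c' / \<eta> + 3 \<le> c / \<eta>"
      using that assms(3) divide_right_mono[of "c' + 3 * \<eta>" c \<eta>] by (simp add: add_divide_distrib)
    then have "\<lfloor>c' / \<eta>\<rfloor> + 3 \<le> \<lfloor>c / \<eta>\<rfloor>" by linarith
    moreover have "0 \<le> \<lfloor>c' / \<eta>\<rfloor>" using that assms(3) by simp
    ultimately show ?thesis by linarith
  qed
  show ?thesis
    using *[of a' a] *[of a a'] assms by (cases "a' \<le> a") (auto simp: abs_if)
qed

lemma strongly_shatters_slice:
  assumes "strongly_shatters H S r"
  shows "strongly_shatters ((\<lambda>h j. h (j, k)) ` H) {j. (j, k) \<in> S} (\<lambda>j. r (j, k))"
  unfolding strongly_shatters_def
proof (intro allI impI)
  fix B assume "B \<subseteq> {j. (j, k) \<in> S}"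
  then have "(\<lambda>j. (j, k)) ` B \<subseteq> S" by auto
  with assms obtain h where "h \<in> H"
    "\<forall>y\<in>S. (y \<in> (\<lambda>j. (j, k)) ` B \<longrightarrow> r y + 1 \<le> h y) \<and> (y \<notin> (\<lambda>j. (j, k)) ` B \<longrightarrow> h y + 1 \<le> r y)"
    unfolding strongly_shatters_def by blast
  then show "\<exists>h'\<in>(\<lambda>h j. h (j, k)) ` H. \<forall>j\<in>{j. (j, k) \<in> S}.
               (j \<in> B \<longrightarrow> r (j, k) + 1 \<le> h' j) \<and> (j \<notin> B \<longrightarrow> h' j + 1 \<le> r (j, k))"
    by (intro bexI[of _ "\<lambda>j. h (j, k)"]) auto
qed

text \<open>Level \<open>r j\<close> of the quantization with step \<open>\<eta>\<close> is turned into the real witness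
  \<open>(r j + 1/2) \<eta>\<close>, which every function above (resp. below) that level clears by \<open>\<eta>/2\<close>.\<close>
lemma fat_shatters_if_quantized_strongly_shatters:
  fixes G :: "('x \<Rightarrow> real) set" and w :: "nat \<Rightarrow> 'x"
  assumes "G \<subseteq> G0" "finite S" "w ` S \<subseteq> X" "\<forall>g\<in>G. \<forall>j\<in>S. 0 \<le> g (w j)"
    and "0 < \<eta>" "t \<le> \<eta> / 2"
    and sh: "strongly_shatters ((\<lambda>g j. nat \<lfloor>g (w j) / \<eta>\<rfloor>) ` G) S r"
  shows "inj_on w S" "fat_shatters G0 X t (w ` S)"
proof -
  have witness: "\<exists>g\<in>G. \<forall>j\<in>S. (j \<in> B \<longrightarrow> (real (r j) + 1) * \<eta> \<le> g (w j))
                                \<and> (j \<notin> B \<longrightarrow> g (w j) < real (r j) * \<eta>)"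
    if "B \<subseteq> S" for B
  proof -
    from sh that obtain g where g: "g \<in> G"
      "\<forall>j\<in>S. (j \<in> B \<longrightarrow> r j + 1 \<le> nat \<lfloor>g (w j) / \<eta>\<rfloor>) \<and> (j \<notin> B \<longrightarrow> nat \<lfloor>g (w j) / \<eta>\<rfloor> + 1 \<le> r j)"
      unfolding strongly_shatters_def by blast
    have "(real (r j) + 1) * \<eta> \<le> g (w j)" if "j \<in> S" "j \<in> B" for j
    proof -
      have "real (r j) + 1 \<le> real (nat \<lfloor>g (w j) / \<eta>\<rfloor>)" using g(2) that by fastforce
      then show ?thesis using nat_floor_divide_bounds(1)[of "g (w j)" \<eta>] assms(4,5) g(1) that
        by (meson mult_right_mono less_imp_le order_trans)
    qed
    moreover have "g (w j) < real (r j) * \<eta>" if "j \<in> S" "j \<notin> B" for j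
    proof -
      have "real (nat \<lfloor>g (w j) / \<eta>\<rfloor>) + 1 \<le> real (r j)" using g(2) that by fastforce
      then show ?thesis using nat_floor_divide_bounds(2)[of "g (w j)" \<eta>] assms(4,5) g(1) that
        by (smt (verit) mult_right_mono)
    qed
    ultimately show ?thesis using g(1) by blast
  qed
  show inj: "inj_on w S"
  proof (rule inj_onI, rule ccontr)
    fix j1 j2 assume j: "j1 \<in> S" "j2 \<in> S" "w j1 = w j2" "j1 \<noteq> j2"
    from witness[of "{j1}"] j obtain g1 where
      "(real (r j1) + 1) * \<eta> \<le> g1 (w j2)" "g1 (w j2) < real (r j2) * \<eta>" by force
    moreover from witness[of "{j2}"] j obtain g2 where
      "(real (r j2) + 1) * \<eta> \<le> g2 (w j2)" "g2 (w j2) < real (r j1) * \<eta>" by force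
    ultimately show False using assms(5) by (simp add: algebra_simps)
  qed
  define s where "s x = (real (r (inv_into S w x)) + 1/2) * \<eta>" for x
  show "fat_shatters G0 X t (w ` S)"
    unfolding fat_shatters_def
  proof (intro conjI exI[of _ s] allI impI)
    fix B assume "B \<subseteq> w ` S"
    then obtain g where "g \<in> G"
      and g: "\<forall>j\<in>S. (j \<in> S \<inter> w -` B \<longrightarrow> (real (r j) + 1) * \<eta> \<le> g (w j))
                    \<and> (j \<notin> S \<inter> w -` B \<longrightarrow> g (w j) < real (r j) * \<eta>)"
      using witness[of "S \<inter> w -` B"] by blast
    have "(x \<in> B \<longrightarrow> t \<le> g x - s x) \<and> (x \<notin> B \<longrightarrow> t \<le> s x - g x)" if "x \<in> w ` S" for x
    proof -
      from that obtain j where j: "j \<in> S" "x = w j" by auto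
      then have "inv_into S w x = j" using inv_into_f_f[OF inj] by simp
      then show ?thesis using g j assms(6) unfolding s_def by (auto simp: algebra_simps)
    qed
    then show "\<exists>f\<in>G0. \<forall>x\<in>w ` S. (x \<in> B \<longrightarrow> t \<le> f x - s x) \<and> (x \<notin> B \<longrightarrow> t \<le> s x - f x)"
      using \<open>g \<in> G\<close> assms(1) by blast
  qed (use assms(2,3) in auto)
qed

lemma card_le_fat_dim:
  assumes "fat_shatters G0 X t S" "fat_dim G0 X t = enat d"
  shows "card S \<le> d"
proof -
  have "enat (card S) \<le> fat_dim G0 X t"
    unfolding fat_dim_def using assms(1) by (intro Sup_upper) auto
  with assms(2) show ?thesis by simp
qed

lemma card_le_if_quantized_strongly_shatters:
  fixes Gs :: "(nat \<Rightarrow> 'x \<Rightarrow> real) set" and w :: "nat \<Rightarrow> 'x"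
  assumes "Gs \<subseteq> prod_class C G0" "\<forall>j<m. w j \<in> X" "\<forall>g\<in>Gs. \<forall>k\<in>{1..C}. \<forall>j<m. 0 \<le> g k (w j)"
    and "0 < \<eta>" "t \<le> \<eta> / 2" "fat_dim G0 X t = enat d"
    and S: "S \<subseteq> {..<m} \<times> {1..C}"
    and sh: "strongly_shatters ((\<lambda>g (j, k). nat \<lfloor>g k (w j) / \<eta>\<rfloor>) ` Gs) S r"
  shows "card S \<le> C * d"
proof -
  define Sk where "Sk k = {j. (j, k) \<in> S}" for k
  have Sk: "finite (Sk k)" "Sk k \<subseteq> {..<m}" for k
    using S finite_subset[of "Sk k" "{..<m}"] unfolding Sk_def by auto
  have "card (Sk k) \<le> d" if "k \<in> {1..C}" for k
  proof -
    have "(\<lambda>h j. h (j, k)) ` (\<lambda>g (j, k). nat \<lfloor>g k (w j) / \<eta>\<rfloor>) ` Gs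
          = (\<lambda>g j. nat \<lfloor>g (w j) / \<eta>\<rfloor>) ` (\<lambda>g. g k) ` Gs"
      by (simp add: image_image)
    with strongly_shatters_slice[OF sh, of k]
    have "strongly_shatters ((\<lambda>g j. nat \<lfloor>g (w j) / \<eta>\<rfloor>) ` (\<lambda>g. g k) ` Gs) (Sk k) (\<lambda>j. r (j, k))"
      unfolding Sk_def by simp
    moreover have "(\<lambda>g. g k) ` Gs \<subseteq> G0" using assms(1) that unfolding prod_class_def by auto
    ultimately have "inj_on w (Sk k)" "fat_shatters G0 X t (w ` Sk k)"
      using Sk[of k] assms(2-5) that
      by (auto intro!: fat_shatters_if_quantized_strongly_shatters[where G = "(\<lambda>g. g k) ` Gs"])
    then show ?thesis using card_le_fat_dim[OF _ assms(6)] card_image by metis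
  qed
  have "S \<subseteq> (\<Union>k\<in>{1..C}. (\<lambda>j. (j, k)) ` Sk k)" using S unfolding Sk_def by auto
  then have "card S \<le> card (\<Union>k\<in>{1..C}. (\<lambda>j. (j, k)) ` Sk k)"
    using Sk by (intro card_mono) auto
  also have "\<dots> \<le> (\<Sum>k\<in>{1..C}. card ((\<lambda>j. (j, k)) ` Sk k))" by (rule card_UN_le) simp
  also have "\<dots> \<le> (\<Sum>k\<in>{1..C}. d)"
    using \<open>\<And>k. k \<in> {1..C} \<Longrightarrow> card (Sk k) \<le> d\<close>
    by (intro sum_mono) (simp add: card_image inj_on_def)
  finally show ?thesis by simp
qed

text \<open>Quantizing the components of representatives of the margin functions with step \<open>\<epsilon>/6\<close>
  turns \<open>\<epsilon>/2\<close>-separation on the subsample \<open>u\<close> into \<open>2\<close>-separation of integer-valued functions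
  on \<open>{..<m} \<times> {1..C}\<close>, whose strong shattering dimension is controlled by the fat-shattering
  dimension of \<open>G0\<close>.\<close>
lemma ln_card_separated_on_subsample_le:
  fixes G0 :: "('x \<Rightarrow> real) set" and u :: "nat \<Rightarrow> 'x \<times> nat"
  assumes "C > 2" "m \<ge> 1" "0 < \<epsilon>" "t \<le> \<epsilon> / 12" "d \<ge> 1" "fat_dim G0 X t = enat d"
    and range: "\<forall>f\<in>G0. \<forall>x\<in>X. 0 \<le> f x \<and> f x \<le> M"
    and u: "\<forall>j<m. u j \<in> X \<times> {1..C}"
    and "finite P" and P: "P \<subseteq> margin_class C \<gamma> (prod_class C G0)"
    and sep: "\<forall>f\<in>P. \<forall>f'\<in>P. f \<noteq> f' \<longrightarrow> (\<exists>j<m. \<epsilon> / 2 \<le> \<bar>f (u j) - f' (u j)\<bar>)"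
  shows "ln (card P) \<le> 4 * real (C * d) * (ln ((m * C + 1) * (nat \<lfloor>6 * M / \<epsilon>\<rfloor> + 1)))\<^sup>2"
proof -
  have "\<forall>f\<in>P. \<exists>g. g \<in> prod_class C G0 \<and> margin_fun C \<gamma> g = f"
    using P unfolding margin_class_def by blast
  then obtain rep where rep: "\<And>f. f \<in> P \<Longrightarrow> rep f \<in> prod_class C G0 \<and> margin_fun C \<gamma> (rep f) = f"
    by metis
  define w where "w j = fst (u j)" for j
  define \<eta> where "\<eta> = \<epsilon> / 6"
  define quant where "quant g = (\<lambda>(j, k). nat \<lfloor>g k (w j) / \<eta>\<rfloor>)" for g :: "nat \<Rightarrow> 'x \<Rightarrow> real"
  define \<Omega> where "\<Omega> = {..<m} \<times> {1..C}"
  define b where "b = nat \<lfloor>6 * M / \<epsilon>\<rfloor>"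
  have "\<eta> > 0" unfolding \<eta>_def using assms(3) by simp
  have w: "\<forall>j<m. w j \<in> X" using u unfolding w_def by (auto simp: mem_Times_iff)
  have rep_range: "0 \<le> rep f k (w j) \<and> rep f k (w j) \<le> M" if "f \<in> P" "k \<in> {1..C}" "j < m" for f k j
    using rep[OF that(1)] that(2,3) range w unfolding prod_class_def by auto
  have two_sep: "\<exists>y\<in>\<Omega>. quant (rep f') y + 2 \<le> quant (rep f) y \<or> quant (rep f) y + 2 \<le> quant (rep f') y"
    if "f \<in> P" "f' \<in> P" "f \<noteq> f'" for f f'
  proof -
    from sep that obtain j where j: "j < m" "\<epsilon> / 2 \<le> \<bar>f (u j) - f' (u j)\<bar>" by blast
    obtain y where uj: "u j = (w j, y)" "y \<in> {1..C}" using u j(1) unfolding w_def by fastforce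
    have "\<epsilon> / 2 \<le> \<bar>margin_fun C \<gamma> (rep f) (w j, y) - margin_fun C \<gamma> (rep f') (w j, y)\<bar>"
      using j(2) rep[OF that(1)] rep[OF that(2)] uj(1) by simp
    then have "\<exists>k\<in>{1..C}. \<epsilon> / 2 \<le> \<bar>rep f k (w j) - rep f' k (w j)\<bar>"
      using assms(1) uj(2) by (intro exists_component_diff_ge) auto
    then obtain k where k: "k \<in> {1..C}" "3 * \<eta> \<le> \<bar>rep f k (w j) - rep f' k (w j)\<bar>"
      unfolding \<eta>_def by auto
    then have "nat \<lfloor>rep f' k (w j) / \<eta>\<rfloor> + 2 \<le> nat \<lfloor>rep f k (w j) / \<eta>\<rfloor>
               \<or> nat \<lfloor>rep f k (w j) / \<eta>\<rfloor> + 2 \<le> nat \<lfloor>rep f' k (w j) / \<eta>\<rfloor>"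
      using rep_range[OF that(1) k(1) j(1)] rep_range[OF that(2) k(1) j(1)] \<open>\<eta> > 0\<close>
      by (intro nat_floor_divide_separated) auto
    then show ?thesis using j(1) k(1) unfolding \<Omega>_def quant_def by (intro bexI[of _ "(j, k)"]) auto
  qed
  let ?H = "quant ` rep ` P"
  have "inj_on (quant \<circ> rep) P"
    by (rule inj_onI) (use two_sep in fastforce)
  then have "card ?H = card P" using card_image by (fastforce simp: image_comp)
  moreover have "ln (card ?H) \<le> 4 * real (C * d) * (ln ((m * C + 1) * (b + 1)))\<^sup>2"
  proof (rule ln_card_two_separated_le)
    show "3 \<le> m * C" using mult_le_mono[of 1 m 3 C] assms(1,2) by simp
    show "1 \<le> C * d" using assms(1,5) by simp
    show "card \<Omega> \<le> m * C" unfolding \<Omega>_def by (simp add: card_cartesian_product)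
    show "two_separated \<Omega> ?H" unfolding two_separated_def using two_sep by blast
    show "\<forall>h\<in>?H. \<forall>y\<in>\<Omega>. h y \<le> b"
    proof clarify
      fix f j k assume "f \<in> P" "(j, k) \<in> \<Omega>"
      then have "rep f k (w j) / \<eta> \<le> 6 * M / \<epsilon>"
        using rep_range \<open>\<eta> > 0\<close> unfolding \<Omega>_def \<eta>_def by (auto simp: divide_right_mono)
      then show "quant (rep f) (j, k) \<le> b" unfolding quant_def b_def by (simp add: floor_mono nat_mono)
    qed
    show "card S \<le> C * d" if "S \<subseteq> \<Omega>" "strongly_shatters ?H S r" for S r
    proof (rule card_le_if_quantized_strongly_shatters)
      show "rep ` P \<subseteq> prod_class C G0" using rep by auto
      show "\<forall>g\<in>rep ` P. \<forall>k\<in>{1..C}. \<forall>j<m. 0 \<le> g k (w j)" using rep_range by auto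
      show "strongly_shatters ((\<lambda>g (j, k). nat \<lfloor>g k (w j) / \<eta>\<rfloor>) ` rep ` P) S r"
        using that(2) unfolding quant_def .
    qed (use that w \<open>\<eta> > 0\<close> assms(4,6) in \<open>auto simp: \<Omega>_def \<eta>_def\<close>)
  qed (use \<open>finite P\<close> \<Omega>_def in auto)
  ultimately show ?thesis unfolding b_def by simp
qed

lemma quantization_size_le:
  fixes \<epsilon> M L :: real and C :: nat
  assumes "0 < \<epsilon>" "\<epsilon> \<le> 1" "1 \<le> M" "1 \<le> L" "1 \<le> C"
  shows "((real (nat \<lfloor>4 * L / \<epsilon>\<^sup>2\<rfloor>) + 1) * C + 1) * (real (nat \<lfloor>6 * M / \<epsilon>\<rfloor>) + 1)
           \<le> 42 * real C * M * L / \<epsilon> ^ 3"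
proof -
  define Y where "Y = C * L / \<epsilon>\<^sup>2"
  define a where "a = real (nat \<lfloor>4 * L / \<epsilon>\<^sup>2\<rfloor>)"
  define K where "K = M / \<epsilon>"
  have "\<epsilon>\<^sup>2 \<le> 1" using assms(1,2) by (simp add: power_le_one)
  then have "1 \<le> L / \<epsilon>\<^sup>2" using assms(1,4) by (simp add: le_divide_eq)
  then have "real C \<le> Y" unfolding Y_def using mult_left_mono[of 1 "L / \<epsilon>\<^sup>2" C] by simp
  have "a \<le> 4 * L / \<epsilon>\<^sup>2" unfolding a_def using assms(1,4) by simp
  then have "a * C \<le> 4 * Y" unfolding Y_def using mult_right_mono[of a "4 * L / \<epsilon>\<^sup>2" C] by (simp add: ac_simps)
  then have m: "(a + 1) * C + 1 \<le> 6 * Y"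
    using \<open>real C \<le> Y\<close> assms(5) by (simp add: distrib_right)
  have "1 \<le> K" unfolding K_def using assms(1-3) by (simp add: le_divide_eq)
  moreover have "real (nat \<lfloor>6 * K\<rfloor>) \<le> 6 * K" using \<open>1 \<le> K\<close> by simp
  ultimately have b: "real (nat \<lfloor>6 * K\<rfloor>) + 1 \<le> 7 * K" by linarith
  have "((a + 1) * C + 1) * (real (nat \<lfloor>6 * K\<rfloor>) + 1) \<le> 6 * Y * (7 * K)"
    using m b \<open>real C \<le> Y\<close> by (intro mult_mono) auto
  also have "\<dots> = 42 * real C * M * L / \<epsilon> ^ 3"
    unfolding Y_def K_def by (simp add: field_simps power2_eq_square power3_eq_cube)
  finally show ?thesis unfolding a_def K_def by simp
qed

lemma ln_card_separated_margin_set_le: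
  fixes G0 :: "('x \<Rightarrow> real) set" and z :: "nat \<Rightarrow> 'x \<times> nat"
  assumes "C > 2" "M \<ge> 1" and range: "\<forall>f\<in>G0. \<forall>x\<in>X. 0 \<le> f x \<and> f x \<le> M"
    and "0 < \<gamma>" "\<gamma> \<le> 1" "0 < \<epsilon>" "\<epsilon> \<le> \<gamma>"
    and "t \<le> \<epsilon> / 12" "fat_dim G0 X t = enat d" "d \<ge> 1"
    and "n > 0" "\<forall>i<n. z i \<in> X \<times> {1..C}"
    and "finite P" and P: "P \<subseteq> margin_class C \<gamma> (prod_class C G0)"
    and sep: "\<forall>f\<in>P. \<forall>f'\<in>P. f \<noteq> f' \<longrightarrow> \<epsilon> \<le> d2 n z f f'" and "card P \<ge> 3"
  shows "ln (card P) \<le> 4 * real (C * d) * (ln (42 * real C * M * ln (card P) / \<epsilon> ^ 3))\<^sup>2"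
proof -
  define L where "L = ln (card P)"
  define q where "q = \<epsilon>\<^sup>2 / 2"
  define m where "m = nat \<lfloor>4 * L / \<epsilon>\<^sup>2\<rfloor> + 1"
  define Q where "Q = (m * C + 1) * (nat \<lfloor>6 * M / \<epsilon>\<rfloor> + 1)"
  have "1 \<le> L" unfolding L_def using \<open>card P \<ge> 3\<close> by (intro one_le_ln) simp
  have close: "\<forall>x. \<bar>f x - f' x\<bar> \<le> 1" if "f \<in> P" "f' \<in> P" for f f'
  proof
    fix x
    from that P obtain g g' where "f = margin_fun C \<gamma> g" "f' = margin_fun C \<gamma> g'"
      unfolding margin_class_def by blast
    with margin_fun_bounds[of \<gamma> C] assms(4,5) show "\<bar>f x - f' x\<bar> \<le> 1" by (smt (verit))
  qed
  have sep_count: "q * n \<le> card {i\<in>{..<n}. \<epsilon> / 2 \<le> \<bar>f (z i) - f' (z i)\<bar>}"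
    if "f \<in> P" "f' \<in> P" "f \<noteq> f'" for f f'
    unfolding q_def by (rule card_large_diffs_ge[OF \<open>n > 0\<close> \<open>0 < \<epsilon>\<close>]) (use sep that close in auto)
  have many: "real (card P) ^ 2 < exp (q * m)"
  proof -
    have "real (card P) ^ 2 = exp L * exp L"
      unfolding L_def using \<open>card P \<ge> 3\<close> by (simp add: power2_eq_square)
    also have "\<dots> = exp (2 * L)" by (metis exp_add mult_2)
    also have "2 * L = q * (4 * L / \<epsilon>\<^sup>2)" unfolding q_def using \<open>0 < \<epsilon>\<close> by simp
    also have "q * (4 * L / \<epsilon>\<^sup>2) < q * m"
    proof (rule mult_strict_left_mono)
      have "0 \<le> 4 * L / \<epsilon>\<^sup>2" using \<open>1 \<le> L\<close> by simp
      then show "4 * L / \<epsilon>\<^sup>2 < real m" unfolding m_def by linarith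
    qed (use \<open>0 < \<epsilon>\<close> in \<open>simp add: q_def\<close>)
    finally show ?thesis by simp
  qed
  have "0 \<le> q" unfolding q_def by simp
  have "\<exists>s. (\<forall>j<m. s j < n) \<and>
          (\<forall>f\<in>P. \<forall>f'\<in>P. f \<noteq> f' \<longrightarrow> (\<exists>j<m. \<epsilon> / 2 \<le> \<bar>f (z (s j)) - f' (z (s j))\<bar>))"
    by (rule exists_separating_subsample[OF \<open>finite P\<close> \<open>n > 0\<close> \<open>0 \<le> q\<close> _ many])
       (use sep_count in blast)
  then obtain s where s: "\<forall>j<m. s j < n"
    "\<forall>f\<in>P. \<forall>f'\<in>P. f \<noteq> f' \<longrightarrow> (\<exists>j<m. \<epsilon> / 2 \<le> \<bar>f (z (s j)) - f' (z (s j))\<bar>)"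
    by (elim exE conjE)
  have "ln (card P) \<le> 4 * real (C * d) * (ln Q)\<^sup>2"
    unfolding Q_def using assms s \<open>t \<le> \<epsilon> / 12\<close>
    by (intro ln_card_separated_on_subsample_le[where u = "z \<circ> s"])
       (auto simp: m_def)
  also have "\<dots> \<le> 4 * real (C * d) * (ln (42 * real C * M * L / \<epsilon> ^ 3))\<^sup>2"
  proof -
    have "real Q \<le> 42 * real C * M * L / \<epsilon> ^ 3"
      unfolding Q_def m_def using quantization_size_le[of \<epsilon> M L C] assms \<open>1 \<le> L\<close>
      by (simp add: algebra_simps)
    moreover have "1 \<le> Q" unfolding Q_def by simp
    ultimately have "ln Q \<le> ln (42 * real C * M * L / \<epsilon> ^ 3)" by simp
    then show ?thesis using \<open>1 \<le> Q\<close> by (intro mult_left_mono power_mono) auto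
  qed
  finally show ?thesis unfolding L_def .
qed

section \<open>Solving the implicit bound\<close>

lemma square_le_4_exp: "0 \<le> t \<Longrightarrow> t\<^sup>2 \<le> 4 * exp t" for t :: real
proof -
  assume "0 \<le> t"
  have "(t / 2)\<^sup>2 \<le> (1 + t / 2)\<^sup>2" using \<open>0 \<le> t\<close> by (intro power_mono) auto
  also have "\<dots> \<le> (exp (t / 2))\<^sup>2" using \<open>0 \<le> t\<close> exp_ge_add_one_self by (intro power_mono) auto
  also have "\<dots> = exp t" by (simp add: power2_eq_square flip: exp_add)
  finally show ?thesis by (simp add: power_divide)
qed

text \<open>With \<open>Y\<close> the argument of the squared logarithm in \<open>R\<close>, the left-hand side below is
  at most \<open>144 c d (ln Y)\<^sup>2\<close> on the whole window, because \<open>42 c M x / e\<^sup>3 \<le> Y\<^sup>6\<close> there.\<close>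
lemma ln_square_bound_lt_on_window:
  fixes c M d e g x :: real
  assumes c: "c \<ge> 3" and M: "M \<ge> 1" and d: "d \<ge> 1" and e: "0 < e" "e \<le> g" and g: "g \<le> 1"
  defines "Y \<equiv> 256 * c * M\<^sup>2 / e\<^sup>2 * d"
  defines "R \<equiv> 640 * c * d * (ln Y)\<^sup>2 * ln (7 * g / e)"
  shows "2 \<le> R" and "R < x \<Longrightarrow> x \<le> 2 * R \<Longrightarrow> 4 * c * d * (ln (42 * c * M * x / e ^ 3))\<^sup>2 < x"
proof -
  have "e \<le> 1" using e g by linarith
  have "0 < e\<^sup>2" "e\<^sup>2 \<le> 1" using e \<open>e \<le> 1\<close> by (auto intro: power_le_one)
  have "e\<^sup>2 \<le> M\<^sup>2" using \<open>e\<^sup>2 \<le> 1\<close> one_le_power[OF M, of 2] by linarith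
  then have "1 \<le> M\<^sup>2 / e\<^sup>2" using \<open>0 < e\<^sup>2\<close> by (simp add: le_divide_eq)
  then have "1 * 1 * 1 \<le> c * (M\<^sup>2 / e\<^sup>2) * d" using c d by (intro mult_mono) auto
  then have "256 \<le> Y" unfolding Y_def by simp
  define L where "L = ln Y"
  have "1 \<le> L" unfolding L_def using \<open>256 \<le> Y\<close> by (intro one_le_ln) simp
  define K where "K = ln (7 * g / e)"
  have "7 \<le> 7 * g / e" using e by (simp add: le_divide_eq)
  then have "1 \<le> K" unfolding K_def by (intro one_le_ln) simp
  have "K \<le> 7 / e"
  proof -
    have "K \<le> 7 * g / e" unfolding K_def using e by (intro ln_bound) auto
    also have "\<dots> \<le> 7 / e" using e g by (intro divide_right_mono) auto
    finally show ?thesis .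
  qed
  have R: "R = 640 * (c * d * L\<^sup>2) * K" unfolding R_def L_def K_def by simp
  have "1 \<le> L\<^sup>2" using \<open>1 \<le> L\<close> by simp
  then have "1 * 1 * 1 \<le> c * d * L\<^sup>2" using c d by (intro mult_mono) auto
  then have "1 \<le> c * d * L\<^sup>2" by simp
  have RL: "640 * (c * d * L\<^sup>2) \<le> R"
    unfolding R using \<open>1 \<le> K\<close> \<open>1 \<le> c * d * L\<^sup>2\<close> by (simp add: mult_le_cancel_left1)
  show "2 \<le> R" using RL \<open>1 \<le> c * d * L\<^sup>2\<close> by linarith
  have "L\<^sup>2 \<le> 4 * Y"
    using square_le_4_exp[of L] \<open>1 \<le> L\<close> \<open>256 \<le> Y\<close> unfolding L_def by simp
  then have "R \<le> 640 * (c * d * (4 * Y)) * (7 / e)"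
    unfolding R using c d \<open>1 \<le> K\<close> \<open>K \<le> 7 / e\<close> \<open>256 \<le> Y\<close>
    by (intro mult_mono) auto
  then have "84 * c * M * R / e ^ 3 \<le> 84 * c * M * (640 * (c * d * (4 * Y)) * (7 / e)) / e ^ 3"
    using c M e by (intro divide_right_mono mult_left_mono) auto
  also have "\<dots> = 1505280 * (c\<^sup>2 * M * d / e ^ 4) * Y"
    using e by (simp add: field_simps power2_eq_square power3_eq_cube power4_eq_xxxx)
  also have "\<dots> \<le> 1505280 * (Y / 256)\<^sup>2 * Y"
  proof -
    have "c\<^sup>2 * M * d \<le> c\<^sup>2 * M ^ 4 * d\<^sup>2"
      using c M d by (intro mult_mono) (auto simp: self_le_power)
    then have "c\<^sup>2 * M * d / e ^ 4 \<le> (c * M\<^sup>2 * d / e\<^sup>2)\<^sup>2"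
      using e by (simp add: divide_right_mono power_divide power_mult_distrib flip: power_mult)
    also have "c * M\<^sup>2 * d / e\<^sup>2 = Y / 256" unfolding Y_def by simp
    finally show ?thesis using \<open>256 \<le> Y\<close> by (intro mult_right_mono mult_left_mono) auto
  qed
  also have "\<dots> \<le> Y ^ 3 * Y ^ 3"
  proof -
    have "1505280 * (Y / 256)\<^sup>2 * Y = (1505280 / 65536) * Y ^ 3"
      by (simp add: power2_eq_square power3_eq_cube field_simps)
    also have "\<dots> \<le> 256 ^ 3 * Y ^ 3" using \<open>256 \<le> Y\<close> by (intro mult_right_mono) auto
    also have "\<dots> \<le> Y ^ 3 * Y ^ 3" using \<open>256 \<le> Y\<close> by (intro mult_right_mono power_mono) auto
    finally show ?thesis .
  qed
  finally have key: "84 * c * M * R / e ^ 3 \<le> Y ^ 6" by (simp flip: power_add)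
  assume x: "R < x" "x \<le> 2 * R"
  have "1 \<le> 42 * c * M * x / e ^ 3"
  proof -
    have "e ^ 3 \<le> 1" using e \<open>e \<le> 1\<close> by (intro power_le_one) auto
    moreover have "1 * 1 * 1 \<le> c * M * x" using c M x \<open>2 \<le> R\<close> by (intro mult_mono) auto
    ultimately show ?thesis using e by (simp add: le_divide_eq)
  qed
  moreover have "42 * c * M * x / e ^ 3 \<le> 84 * c * M * R / e ^ 3"
    using x c M e by (intro divide_right_mono) auto
  ultimately have "ln (42 * c * M * x / e ^ 3) \<le> ln (Y ^ 6)"
    using key by (subst ln_le_cancel_iff) auto
  also have "\<dots> = 6 * L" unfolding L_def by (simp add: ln_realpow)
  finally have "ln (42 * c * M * x / e ^ 3) \<le> 6 * L" .
  then have "4 * c * d * (ln (42 * c * M * x / e ^ 3))\<^sup>2 \<le> 4 * c * d * (6 * L)\<^sup>2"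
    using c d \<open>1 \<le> 42 * c * M * x / e ^ 3\<close> by (intro mult_left_mono power_mono) auto
  also have "\<dots> = 144 * (c * d * L\<^sup>2)" by (simp add: power2_eq_square)
  also have "\<dots> < x" using RL \<open>1 \<le> c * d * L\<^sup>2\<close> x by linarith
  finally show "4 * c * d * (ln (42 * c * M * x / e ^ 3))\<^sup>2 < x" .
qed

text \<open>A separated set larger than \<open>exp R\<close> would contain one of size \<open>\<lfloor>exp R\<rfloor> + 1\<close>, whose
  logarithm lies in the window \<open>(R, 2 R]\<close> where the previous lemma contradicts the bound of
  \<open>ln_card_separated_margin_set_le\<close>.\<close>
lemma card_separated_margin_set_le:
  fixes G0 :: "('x \<Rightarrow> real) set" and z :: "nat \<Rightarrow> 'x \<times> nat" and d :: nat
  assumes "C > 2" "M \<ge> 1" and range: "\<forall>f\<in>G0. \<forall>x\<in>X. 0 \<le> f x \<and> f x \<le> M"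
    and "0 < \<gamma>" "\<gamma> \<le> 1" "0 < \<epsilon>" "\<epsilon> \<le> \<gamma>"
    and "t \<le> \<epsilon> / 12" "fat_dim G0 X t = enat d" "d \<ge> 1"
    and "n > 0" "\<forall>i<n. z i \<in> X \<times> {1..C}"
    and "finite P" and P: "P \<subseteq> margin_class C \<gamma> (prod_class C G0)"
    and sep: "\<forall>f\<in>P. \<forall>f'\<in>P. f \<noteq> f' \<longrightarrow> \<epsilon> \<le> d2 n z f f'"
  shows "real (card P) \<le> exp (640 * real C * d * (ln (256 * real C * M\<^sup>2 / \<epsilon>\<^sup>2 * d))\<^sup>2 * ln (7 * \<gamma> / \<epsilon>))"
    (is "_ \<le> exp ?R")
proof (rule ccontr)
  assume "\<not> ?thesis"
  have C: "real C \<ge> 3" and d: "real d \<ge> 1" using assms(1,10) by simp_all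
  note window = ln_square_bound_lt_on_window[OF C assms(2) d assms(6,7,5)]
  define K where "K = nat \<lfloor>exp ?R\<rfloor>"
  have "real K = of_int \<lfloor>exp ?R\<rfloor>" unfolding K_def by simp
  then have K: "real K \<le> exp ?R" "exp ?R < real K + 1" by linarith+
  with \<open>\<not> ?thesis\<close> have "K + 1 \<le> card P" by linarith
  then obtain P' where P': "P' \<subseteq> P" "card P' = K + 1" "finite P'"
    by (rule obtain_subset_with_card_n)
  have "3 \<le> exp ?R" using window(1) exp_ge_add_one_self[of ?R] by linarith
  then have "3 \<le> card P'" using K P'(2) by linarith
  define x where "x = ln (card P')"
  have "exp ?R < card P'" using K P'(2) by simp
  then have "ln (exp ?R) < x"
    unfolding x_def using \<open>3 \<le> card P'\<close> by (intro ln_less_cancel_iff[THEN iffD2]) auto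
  then have "?R < x" by simp
  moreover have "x \<le> 2 * ?R"
  proof -
    have "3 * exp ?R \<le> exp ?R * exp ?R" using \<open>3 \<le> exp ?R\<close> by (intro mult_right_mono) auto
    moreover have "real (card P') = real K + 1" using P'(2) by simp
    ultimately have "real (card P') \<le> exp ?R * exp ?R" using K \<open>3 \<le> exp ?R\<close> by linarith
    also have "\<dots> = exp (2 * ?R)" by (metis exp_add mult_2)
    finally have "real (card P') \<le> exp (2 * ?R)" .
    then have "x \<le> ln (exp (2 * ?R))" unfolding x_def using \<open>3 \<le> card P'\<close>
      by (intro ln_le_cancel_iff[THEN iffD2]) auto
    then show ?thesis by simp
  qed
  ultimately have "4 * real C * d * (ln (42 * real C * M * x / \<epsilon> ^ 3))\<^sup>2 < x"
    by (rule window(2))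
  moreover have "x \<le> 4 * real (C * d) * (ln (42 * real C * M * x / \<epsilon> ^ 3))\<^sup>2"
    unfolding x_def
  proof (rule ln_card_separated_margin_set_le[OF assms(1-12) P'(3) _ _ \<open>3 \<le> card P'\<close>])
    show "P' \<subseteq> margin_class C \<gamma> (prod_class C G0)" using P P'(1) by (rule order_trans[rotated])
    show "\<forall>f\<in>P'. \<forall>f'\<in>P'. f \<noteq> f' \<longrightarrow> \<epsilon> \<le> d2 n z f f'" using sep P'(1) by blast
  qed
  ultimately show False by simp
qed

lemma ln_le_if_le_exp: "real k \<le> exp R \<Longrightarrow> 0 \<le> R \<Longrightarrow> ln (real k) \<le> R"
  by (cases "k = 0") (simp_all add: ln_le_cancel_iff[symmetric])

theorem corollary2:
  fixes C :: nat and A M \<gamma> \<epsilon> :: real and n :: nat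
    and G0 :: "((real^'d) \<Rightarrow> real) set"
    and z :: "nat \<Rightarrow> (real^'d) \<times> nat"
  assumes "C > 2" and "A \<ge> 1" and "M \<ge> 1"
    and "\<forall>f\<in>G0. \<forall>x\<in>cube A. 0 \<le> f x \<and> f x \<le> M"
    and "0 < \<gamma>" and "\<gamma> \<le> 1"
    and "0 < \<epsilon>" and "\<epsilon> \<le> \<gamma>"
    and "fat_dim G0 (cube A) (\<epsilon> / 384) \<ge> 1"
    and "fat_dim G0 (cube A) (\<epsilon> / 384) \<noteq> \<infinity>"
    and "n > 0" and "\<forall>i<n. z i \<in> Zset A C"
  shows "covering_number \<epsilon> (margin_class C \<gamma> (prod_class C G0)) (d2 n z) \<noteq> \<infinity> \<and>
    ln (real (the_enat (covering_number \<epsilon> (margin_class C \<gamma> (prod_class C G0)) (d2 n z))))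
    \<le> 640 * real C * real (the_enat (fat_dim G0 (cube A) (\<epsilon> / 384)))
       * (ln (256 * real C * M^2 / \<epsilon>^2 * real (the_enat (fat_dim G0 (cube A) (\<epsilon> / 384)))))^2
       * ln (7 * \<gamma> / \<epsilon>)"
proof -
  define d where "d = the_enat (fat_dim G0 (cube A) (\<epsilon> / 384))"
  define R where "R = 640 * real C * d * (ln (256 * real C * M\<^sup>2 / \<epsilon>\<^sup>2 * d))\<^sup>2 * ln (7 * \<gamma> / \<epsilon>)"
  define F where "F = margin_class C \<gamma> (prod_class C G0)"
  have d: "fat_dim G0 (cube A) (\<epsilon> / 384) = enat d" "d \<ge> 1"
    using assms(9,10) unfolding d_def by (auto simp: one_enat_def)
  have "2 \<le> R"
    unfolding R_def using assms(1,3,6-8) d(2) by (intro ln_square_bound_lt_on_window(1)) auto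
  have cover: "covering_number \<epsilon> F (d2 n z) \<noteq> \<infinity> \<and> the_enat (covering_number \<epsilon> F (d2 n z)) \<le> nat \<lfloor>exp R\<rfloor>"
  proof (rule covering_number_le_packing)
    show "\<forall>f\<in>F. d2 n z f f < \<epsilon>" using assms(7) by (simp add: d2_def)
    show "\<forall>f g. d2 n z f g = d2 n z g f" by (simp add: d2_def abs_minus_commute)
    show "card P \<le> nat \<lfloor>exp R\<rfloor>"
      if "finite P" "P \<subseteq> F" "\<forall>f\<in>P. \<forall>g\<in>P. f \<noteq> g \<longrightarrow> \<epsilon> \<le> d2 n z f g" for P
      using card_separated_margin_set_le[OF assms(1,3,4,5,6,7,8) _ d _ _ that[unfolded F_def]] assms(7,11,12)
      unfolding R_def Zset_def by (intro le_nat_floor) auto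
  qed
  then have "real (the_enat (covering_number \<epsilon> F (d2 n z))) \<le> real (nat \<lfloor>exp R\<rfloor>)"
    by (simp only: of_nat_le_iff)
  also have "\<dots> \<le> exp R" by (simp add: of_nat_floor)
  finally show ?thesis
    using cover \<open>2 \<le> R\<close> ln_le_if_le_exp unfolding F_def R_def d_def by simp
qed

end
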